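(* Let $d\ge2$, $A\in\mathcal C^{d-1}$, $p\in[1,\infty)$ and $C_1,C_2\in\mathcal C^d_A$. Then: (1) $\Phi_{C_1,C_2;A,p}(0)=\Phi_{C_1,C_2;A,p}(1)=0$; (2) $\Phi_{C_1,C_2;A,p}$ is continuous on $\mathbb I$, and for $p=1$ it is Lipschitz continuous with constant $2$; (3) $\Phi_{C_1,C_2;A,p}(y)\le 2\min\{y,1-y\}$ for all $y\in\mathbb I$, and this bound is sharp (attained for some $C_1,C_2\in\mathcal C^d_A$ at every $y$). Moreover, $\max_{C_1,C_2\in\mathcal C^d_A}D_{A,p}(C_1,C_2)=2^{-1/p}$.
   Context: $\mathbb I=[0,1]$, $\lambda$ Lebesgue measure. A $d$-copula $C\in\mathcal C^d$ is the distribution function on $\mathbb I^d$ of a probability measure $\mu_C$ with uniform univariate marginals; points are $(\mathbf x,y)$, $\mathbf x\in\mathbb I^{d-1}$. $C_{1:(d-1)}$ is the marginal copula of the first $d-1$ coordinates; $\mathcal C^d_A=\{C\in\mathcal C^d:C_{1:(d-1)}=A\}$ (for $d=2$, $\mu_A=\lambda$, $\mathcal C^2_A=\mathcal C^2$). $K_C$ is the Markov kernel of $C$ w.r.t. the first $d-1$ coordinates: $\mu_C(B\times F)=\int_B K_C(\mathbf x,F)\,\mathrm d\mu_{A}(\mathbf x)$ for $C\in\mathcal C^d_A$. For $C_1,C_2\in\mathcal C^d_A$ and $y\in\mathbb I$, $\Phi_{C_1,C_2;A,p}(y)=\int_{\mathbb I^{d-1}}|K_{C_1}(\mathbf x,[0,y])-K_{C_2}(\mathbf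 x,[0,y])|^p\,\mathrm d\mu_A(\mathbf x)$ and $D_{A,p}(C_1,C_2)=\big(\int_{\mathbb I}\Phi_{C_1,C_2;A,p}(y)\,\mathrm d\lambda(y)\big)^{1/p}$. *)

theory Defs
  imports "HOL-Probability.Probability"
begin

text \<open>A k-copula is represented by its probability measure mu_C on real^'k
  (k = CARD('k)); the copula itself is the distribution function of this measure.\<close>

definition copula_meas :: "(real^'k::finite) measure \<Rightarrow> bool" where
  "copula_meas \<mu> \<longleftrightarrow> sets \<mu> = sets borel \<and> prob_space \<mu> \<and>
     (\<forall>i. \<forall>t\<in>{0..1}. measure \<mu> {x. x $ i \<le> t} = t)"

text \<open>A d-copula (d = CARD('k) + 1), points written as (x, y) with x in real^'k, y real.\<close>

definition dcopula_meas :: "((real^'k::finite) \<times> real) measure \<Rightarrow> bool" where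
  "dcopula_meas \<mu> \<longleftrightarrow> sets \<mu> = sets borel \<and> prob_space \<mu> \<and>
     (\<forall>i. \<forall>t\<in>{0..1}. measure \<mu> {z. fst z $ i \<le> t} = t) \<and>
     (\<forall>t\<in>{0..1}. measure \<mu> {z. snd z \<le> t} = t)"

definition copulas_with_marginal :: "(real^'k::finite) measure \<Rightarrow> ((real^'k::finite) \<times> real) measure set" where
  "copulas_with_marginal \<mu>A = {\<mu>. dcopula_meas \<mu> \<and> distr \<mu> borel fst = \<mu>A}"

definition markov_kernel_of ::
  "(real^'k::finite) measure \<Rightarrow> ((real^'k::finite) \<times> real) measure \<Rightarrow> (real^'k \<Rightarrow> real measure) \<Rightarrow> bool" where
  "markov_kernel_of \<mu>A \<mu> K \<longleftrightarrow>
     (\<forall>x. prob_space (K x) \<and> sets (K x) = sets borel) \<and>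
     (\<forall>F\<in>sets borel. (\<lambda>x. measure (K x) F) \<in> borel_measurable borel) \<and>
     (\<forall>B\<in>sets borel. \<forall>F\<in>sets borel.
        measure \<mu> (B \<times> F) = set_lebesgue_integral \<mu>A B (\<lambda>x. measure (K x) F))"

definition Phi ::
  "(real^'k::finite) measure \<Rightarrow> (real^'k \<Rightarrow> real measure) \<Rightarrow> (real^'k \<Rightarrow> real measure) \<Rightarrow> real \<Rightarrow> real \<Rightarrow> real" where
  "Phi \<mu>A K1 K2 p y =
     (\<integral>x. \<bar>measure (K1 x) {0..y} - measure (K2 x) {0..y}\<bar> powr p \<partial>\<mu>A)"

definition Dp ::
  "(real^'k::finite) measure \<Rightarrow> (real^'k \<Rightarrow> real measure) \<Rightarrow> (real^'k \<Rightarrow> real measure) \<Rightarrow> real \<Rightarrow> real" where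
  "Dp \<mu>A K1 K2 p = (set_lebesgue_integral lborel {0..1} (\<lambda>y. Phi \<mu>A K1 K2 p y)) powr (1 / p)"

end

theory Submission
  imports Defs
begin

text \<open>Fix \<open>y\<close>. The functions \<open>x \<mapsto> K\<^sub>j(x, [0, y])\<close> take values in [0, 1] and both average to \<open>y\<close>
  under \<open>\<mu>\<^sub>A\<close>, so \<open>|K\<^sub>1 - K\<^sub>2|\<^sup>p \<le> |K\<^sub>1 - K\<^sub>2| \<le> min(K\<^sub>1 + K\<^sub>2, 2 - K\<^sub>1 - K\<^sub>2)\<close> integrates to at most
  \<open>2 min(y, 1 - y)\<close>. Since \<open>K\<^sub>j(x, [0, y])\<close> is nondecreasing in \<open>y\<close> and \<open>|u\<^sup>p - v\<^sup>p| \<le> p |u - v|\<close>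
  on [0, 1], the same averaging makes \<open>\<Phi>\<close> \<open>2p\<close>-Lipschitz. The bound is attained by the copulas
  concentrated on the graphs of \<open>x \<mapsto> x\<^sub>i\<close> and \<open>x \<mapsto> 1 - x\<^sub>i\<close>: their kernels are almost everywhere
  Dirac measures, so \<open>\<Phi>(y)\<close> is the \<open>\<mu>\<^sub>A\<close>-measure of the symmetric difference of \<open>{x\<^sub>i \<le> y}\<close>
  and \<open>{x\<^sub>i \<ge> 1 - y}\<close>, which is \<open>2 min(y, 1 - y)\<close>. The tent function integrates to 1/2, whence
  the value \<open>2 powr (-1/p)\<close> of \<open>D\<close>.\<close>

lemma abs_powr_le_abs:
  fixes t p :: real
  assumes "\<bar>t\<bar> \<le> 1" "1 \<le> p"
  shows "\<bar>t\<bar> powr p \<le> \<bar>t\<bar>"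
  using assms powr_le_one_le[of "\<bar>t\<bar>" p] by (cases "t = 0") auto

lemma powr_diff_le_mult_diff:
  fixes u v p :: real
  assumes "0 \<le> v" "v \<le> u" "u \<le> 1" "1 \<le> p"
  shows "u powr p - v powr p \<le> p * (u - v)"
proof (cases "v = 0")
  case True
  have "u powr p \<le> u powr 1" using assms by (intro powr_mono') auto
  also have "\<dots> \<le> p * u" using assms mult_right_mono[of 1 p u] by simp
  finally show ?thesis using True assms by simp
next
  case False
  show ?thesis
  proof (cases "v = u")
    case False
    with \<open>v \<noteq> 0\<close> assms have "v < u" "0 < v" by auto
    have "\<And>x. v \<le> x \<Longrightarrow> ((\<lambda>z. z powr p) has_real_derivative p * x powr (p - 1)) (at x)"
      using \<open>0 < v\<close> by (auto intro!: has_real_derivative_powr)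
    from MVT2[OF \<open>v < u\<close> this] obtain z where z: "v < z" "z < u"
      "u powr p - v powr p = (u - v) * (p * z powr (p - 1))" by blast
    have "z powr (p - 1) \<le> 1" using z assms \<open>0 < v\<close> powr_mono2[of "p - 1" z 1] by simp
    then show ?thesis using z assms by (simp add: mult_left_mono)
  qed simp
qed

lemma abs_powr_diff_le:
  fixes u v p :: real
  assumes "u \<in> {0..1}" "v \<in> {0..1}" "1 \<le> p"
  shows "\<bar>u powr p - v powr p\<bar> \<le> p * \<bar>u - v\<bar>"
  using assms powr_diff_le_mult_diff[of v u p] powr_diff_le_mult_diff[of u v p]
    powr_mono2[of p u v] powr_mono2[of p v u]
  by (cases "v \<le> u") auto

context prob_space
begin

lemma prob_uniform_less:
  assumes g: "g \<in> borel_measurable M"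
    and unif: "\<And>t. t \<in> {0..1} \<Longrightarrow> prob {x\<in>space M. g x \<le> t} = t"
    and s: "s \<in> {0..1}"
  shows "prob {x\<in>space M. g x < s} = s"
proof (rule antisym)
  show "prob {x\<in>space M. g x < s} \<le> s"
    using unif[OF s] finite_measure_mono[of "{x\<in>space M. g x < s}" "{x\<in>space M. g x \<le> s}"] g
    by force
  show "s \<le> prob {x\<in>space M. g x < s}"
  proof (rule field_le_epsilon)
    fix e :: real assume "0 < e"
    show "s \<le> prob {x\<in>space M. g x < s} + e"
    proof (cases "e \<le> s")
      case True
      have "s - e = prob {x\<in>space M. g x \<le> s - e}" using unif[of "s - e"] True s \<open>0 < e\<close> by simp
      also have "\<dots> \<le> prob {x\<in>space M. g x < s}"
        using g \<open>0 < e\<close> by (intro finite_measure_mono) auto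
      finally show ?thesis by simp
    qed (use measure_nonneg in \<open>smt (verit)\<close>)
  qed
qed

lemma prob_uniform_ge:
  assumes g: "g \<in> borel_measurable M"
    and unif: "\<And>t. t \<in> {0..1} \<Longrightarrow> prob {x\<in>space M. g x \<le> t} = t"
    and s: "s \<in> {0..1}"
  shows "prob {x\<in>space M. s \<le> g x} = 1 - s"
proof -
  have "{x\<in>space M. s \<le> g x} = space M - {x\<in>space M. g x < s}" by auto
  then show ?thesis using prob_compl g prob_uniform_less[OF g unif s] by simp
qed

lemma prob_uniform_atLeastAtMost:
  assumes g: "g \<in> borel_measurable M"
    and unif: "\<And>t. t \<in> {0..1} \<Longrightarrow> prob {x\<in>space M. g x \<le> t} = t"
    and "0 \<le> a" "a \<le> b" "b \<le> 1"
  shows "prob {x\<in>space M. g x \<in> {a..b}} = b - a"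
proof -
  have "{x\<in>space M. g x \<in> {a..b}} = {x\<in>space M. g x \<le> b} - {x\<in>space M. g x < a}" by auto
  then show ?thesis using assms prob_uniform_less[OF g unif, of a]
    by (simp add: finite_measure_Diff subset_eq)
qed

end

section \<open>Averaging conditional distribution functions\<close>

text \<open>\<open>F y x\<close> stands for \<open>K(x, [0, y])\<close>, where \<open>K\<close> is the Markov kernel of a copula whose
  first \<open>d - 1\<close> coordinates have distribution \<open>M\<close>.\<close>

definition uniform_cdf_family :: "'a measure \<Rightarrow> (real \<Rightarrow> 'a \<Rightarrow> real) \<Rightarrow> bool" where
  "uniform_cdf_family M F \<longleftrightarrow>
     (\<forall>y. F y \<in> borel_measurable M) \<and> (\<forall>y x. F y x \<in> {0..1}) \<and> (\<forall>x. mono (\<lambda>y. F y x)) \<and>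
     (\<forall>y\<in>{0..1}. integral\<^sup>L M (F y) = y)"

context prob_space
begin

lemma uniform_cdf_family_integrable:
  assumes "uniform_cdf_family M F"
  shows "integrable M (F y)"
  using assms unfolding uniform_cdf_family_def
  by (intro integrable_const_bound[where B=1]) auto

lemma uniform_cdf_family_integrable_abs_diff_powr:
  assumes F: "uniform_cdf_family M F" and G: "uniform_cdf_family M G" and p: "1 \<le> p"
  shows "integrable M (\<lambda>x. \<bar>F y x - G y x\<bar> powr p)"
proof (rule integrable_const_bound[where B=1])
  have "F y x \<in> {0..1}" "G y x \<in> {0..1}" for x
    using F G by (auto simp: uniform_cdf_family_def)
  then have "\<bar>F y x - G y x\<bar> \<le> 1" for x
    by (smt (verit) atLeastAtMost_iff)
  then have "\<bar>F y x - G y x\<bar> powr p \<le> 1" for x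
    using abs_powr_le_abs[OF _ p] order_trans by blast
  then show "AE x in M. norm (\<bar>F y x - G y x\<bar> powr p) \<le> 1" by simp
  have "F y \<in> borel_measurable M" "G y \<in> borel_measurable M"
    using F G by (auto simp: uniform_cdf_family_def)
  then show "(\<lambda>x. \<bar>F y x - G y x\<bar> powr p) \<in> borel_measurable M" by measurable
qed

lemma integral_abs_diff_powr_le_tent:
  assumes F: "uniform_cdf_family M F" and G: "uniform_cdf_family M G"
    and p: "1 \<le> p" and y: "y \<in> {0..1}"
  shows "(\<integral>x. \<bar>F y x - G y x\<bar> powr p \<partial>M) \<le> 2 * min y (1 - y)"
proof -
  have FG: "F y x \<in> {0..1}" "G y x \<in> {0..1}" for x
    using F G by (auto simp: uniform_cdf_family_def)
  have le_abs: "\<bar>F y x - G y x\<bar> powr p \<le> \<bar>F y x - G y x\<bar>" for x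
    using FG[of x] p by (intro abs_powr_le_abs) auto
  have int: "integrable M (F y)" "integrable M (G y)"
    using F G by (auto intro: uniform_cdf_family_integrable)
  have int_powr: "integrable M (\<lambda>x. \<bar>F y x - G y x\<bar> powr p)"
    using F G p by (rule uniform_cdf_family_integrable_abs_diff_powr)
  have means: "integral\<^sup>L M (F y) = y" "integral\<^sup>L M (G y) = y"
    using F G y by (auto simp: uniform_cdf_family_def)
  have "(\<integral>x. \<bar>F y x - G y x\<bar> powr p \<partial>M) \<le> (\<integral>x. F y x + G y x \<partial>M)"
    using FG le_abs by (intro integral_mono int_powr Bochner_Integration.integrable_add int)
      (smt (verit) atLeastAtMost_iff)
  also have "\<dots> = 2 * y" using int means by simp
  finally have "(\<integral>x. \<bar>F y x - G y x\<bar> powr p \<partial>M) \<le> 2 * y" .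
  moreover have "(\<integral>x. \<bar>F y x - G y x\<bar> powr p \<partial>M) \<le> (\<integral>x. 2 - (F y x + G y x) \<partial>M)"
    using FG le_abs by (intro integral_mono int_powr Bochner_Integration.integrable_diff
        Bochner_Integration.integrable_add int) (auto, smt (verit) atLeastAtMost_iff)
  moreover have "(\<integral>x. 2 - (F y x + G y x) \<partial>M) = 2 - 2 * y"
    using int means prob_space by (subst Bochner_Integration.integral_diff) auto
  ultimately show ?thesis by (simp add: min_def)
qed

lemma lipschitz_on_integral_abs_diff_powr:
  assumes F: "uniform_cdf_family M F" and G: "uniform_cdf_family M G" and p: "1 \<le> p"
  shows "(2 * p)-lipschitz_on {0..1} (\<lambda>y. \<integral>x. \<bar>F y x - G y x\<bar> powr p \<partial>M)"
proof -
  let ?\<Phi> = "\<lambda>y. \<integral>x. \<bar>F y x - G y x\<bar> powr p \<partial>M"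
  have int_powr: "integrable M (\<lambda>x. \<bar>F y x - G y x\<bar> powr p)" for y
    using F G p by (rule uniform_cdf_family_integrable_abs_diff_powr)
  have step: "\<bar>?\<Phi> y' - ?\<Phi> y\<bar> \<le> 2 * p * (y' - y)"
    if y: "y \<in> {0..1}" "y' \<in> {0..1}" "y \<le> y'" for y y'
  proof -
    have FG: "F t x \<in> {0..1}" "G t x \<in> {0..1}" for t x
      using F G by (auto simp: uniform_cdf_family_def)
    have mono: "F y x \<le> F y' x" "G y x \<le> G y' x" for x
      using F G \<open>y \<le> y'\<close> by (auto simp: uniform_cdf_family_def mono_def)
    have pointwise: "\<bar>\<bar>F y' x - G y' x\<bar> powr p - \<bar>F y x - G y x\<bar> powr p\<bar>
        \<le> p * ((F y' x - F y x) + (G y' x - G y x))" for x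
    proof -
      have "\<bar>\<bar>F y' x - G y' x\<bar> powr p - \<bar>F y x - G y x\<bar> powr p\<bar>
          \<le> p * \<bar>\<bar>F y' x - G y' x\<bar> - \<bar>F y x - G y x\<bar>\<bar>"
        using FG[of y' x] FG[of y x] p by (intro abs_powr_diff_le) auto
      also have "\<dots> \<le> p * ((F y' x - F y x) + (G y' x - G y x))"
        using mono[of x] p by (intro mult_left_mono) auto
      finally show ?thesis .
    qed
    have int: "integrable M (F t)" "integrable M (G t)" for t
      using F G by (auto intro: uniform_cdf_family_integrable)
    have "\<bar>?\<Phi> y' - ?\<Phi> y\<bar> = \<bar>\<integral>x. \<bar>F y' x - G y' x\<bar> powr p - \<bar>F y x - G y x\<bar> powr p \<partial>M\<bar>"
      using int_powr by simp
    also have "\<dots> \<le> (\<integral>x. \<bar>\<bar>F y' x - G y' x\<bar> powr p - \<bar>F y x - G y x\<bar> powr p\<bar> \<partial>M)"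
      by (rule integral_abs_bound)
    also have "\<dots> \<le> (\<integral>x. p * ((F y' x - F y x) + (G y' x - G y x)) \<partial>M)"
      using pointwise by (intro integral_mono int_powr integrable_abs int Bochner_Integration.integrable_diff
          Bochner_Integration.integrable_add integrable_mult_right) auto
    also have "\<dots> = p * ((y' - y) + (y' - y))"
      using int y F G by (simp add: uniform_cdf_family_def)
    finally show ?thesis by (simp add: algebra_simps)
  qed
  show ?thesis
  proof (rule lipschitz_onI)
    fix y y' :: real assume "y \<in> {0..1}" "y' \<in> {0..1}"
    then show "dist (?\<Phi> y) (?\<Phi> y') \<le> 2 * p * dist y y'"
      using step[of y y'] step[of y' y] unfolding dist_real_def
      by (cases "y \<le> y'") (auto simp: abs_minus_commute)
  qed (use p in simp)
qed

end

lemma set_integral_tent: "(\<integral>y\<in>{0..1}. 2 * min y (1 - y) \<partial>lborel) = (1 / 2 :: real)"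
proof -
  have "((\<lambda>y. 2 * y) has_integral (1/2)\<^sup>2 - 0\<^sup>2) {0..1/2::real}"
    by (rule fundamental_theorem_of_calculus)
      (auto intro!: derivative_eq_intros simp: has_real_derivative_iff_has_vector_derivative[symmetric])
  then have "((\<lambda>y. 2 * y) has_integral 1/4) {0..1/2::real}" by (simp add: power2_eq_square)
  then have left: "((\<lambda>y. 2 * min y (1 - y)) has_integral 1/4) {0..1/2::real}"
    by (rule has_integral_eq[rotated]) (auto simp: min_def)
  have "((\<lambda>y. 2 - 2 * y) has_integral (2 * 1 - 1\<^sup>2) - (2 * (1/2) - (1/2)\<^sup>2)) {1/2..1::real}"
    by (rule fundamental_theorem_of_calculus)
      (auto intro!: derivative_eq_intros simp: has_real_derivative_iff_has_vector_derivative[symmetric])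
  then have "((\<lambda>y. 2 - 2 * y) has_integral 1/4) {1/2..1::real}" by (simp add: power2_eq_square)
  then have right: "((\<lambda>y. 2 * min y (1 - y)) has_integral 1/4) {1/2..1::real}"
    by (rule has_integral_eq[rotated]) (auto simp: min_def)
  have "((\<lambda>y. 2 * min y (1 - y)) has_integral 1/4 + 1/4) {0..1::real}"
    by (rule has_integral_combine[OF _ _ left right]) auto
  then have "integral {0..1::real} (\<lambda>y. 2 * min y (1 - y)) = 1/4 + 1/4"
    by (rule integral_unique)
  moreover have "set_integrable lborel {0..1::real} (\<lambda>y. 2 * min y (1 - y))"
    unfolding set_integrable_def by (intro borel_integrable_compact continuous_intros) auto
  ultimately show ?thesis by (subst set_borel_integral_eq_integral(2)) auto
qed

section \<open>Copulas and their Markov kernels\<close>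

lemma copula_measD:
  assumes "copula_meas M"
  shows "prob_space M" "sets M = sets borel" "space M = UNIV"
    "(\<lambda>x. x $ i) \<in> borel_measurable M"
    "\<And>t. t \<in> {0..1} \<Longrightarrow> measure M {x. x $ i \<le> t} = t"
proof -
  show sM: "sets M = sets borel" using assms by (simp add: copula_meas_def)
  then show "space M = UNIV" using sets_eq_imp_space_eq by fastforce
  show "prob_space M" "\<And>t. t \<in> {0..1} \<Longrightarrow> measure M {x. x $ i \<le> t} = t"
    using assms by (auto simp: copula_meas_def)
  show "(\<lambda>x. x $ i) \<in> borel_measurable M"
    unfolding measurable_cong_sets[OF sM refl] by (intro borel_measurable_continuous_onI continuous_intros)
qed

lemma copula_meas_coordinate_atLeastAtMost:
  assumes "copula_meas M" "0 \<le> a" "a \<le> b" "b \<le> 1"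
  shows "measure M {x. x $ i \<in> {a..b}} = b - a"
proof -
  interpret prob_space M using copula_measD(1)[OF assms(1)] .
  have "prob {x\<in>space M. x $ i \<in> {a..b}} = b - a"
    using copula_measD(3-5)[OF assms(1)] assms by (intro prob_uniform_atLeastAtMost) auto
  then show ?thesis using copula_measD(3)[OF assms(1)] by simp
qed

lemma copula_meas_coordinate_ge:
  assumes "copula_meas M" "s \<in> {0..1}"
  shows "measure M {x. s \<le> x $ i} = 1 - s"
proof -
  interpret prob_space M using copula_measD(1)[OF assms(1)] .
  have "prob {x\<in>space M. s \<le> x $ i} = 1 - s"
    using copula_measD(3-5)[OF assms(1)] assms by (intro prob_uniform_ge) auto
  then show ?thesis using copula_measD(3)[OF assms(1)] by simp
qed

lemma dcopula_meas_snd_atLeastAtMost: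
  assumes C: "dcopula_meas C" and y: "y \<in> {0..1}"
  shows "measure C (UNIV \<times> {0..y}) = y"
proof -
  interpret prob_space C using C by (simp add: dcopula_meas_def)
  have sC: "sets C = sets borel" and unif: "\<And>t. t \<in> {0..1} \<Longrightarrow> measure C {z. snd z \<le> t} = t"
    using C by (auto simp: dcopula_meas_def)
  have space: "space C = UNIV" using sets_eq_imp_space_eq[OF sC] by simp
  have "snd \<in> borel_measurable C"
    unfolding measurable_cong_sets[OF sC refl]
    by (intro borel_measurable_continuous_onI continuous_intros)
  moreover have "UNIV \<times> {0..y} = {z \<in> space C. snd z \<in> {0..y}}" using space by auto
  ultimately show ?thesis using prob_uniform_atLeastAtMost[of snd 0 y] unif y space by auto
qed

lemma uniform_cdf_family_markov_kernel:
  assumes sM: "sets M = sets borel" and C: "dcopula_meas C" and K: "markov_kernel_of M C K"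
  shows "uniform_cdf_family M (\<lambda>y x. measure (K x) {0..y})"
proof -
  have KP: "prob_space (K x)" "sets (K x) = sets borel" for x
    using K by (auto simp: markov_kernel_of_def)
  have "(\<lambda>x. measure (K x) {0..y}) \<in> borel_measurable M" for y
    using K unfolding markov_kernel_of_def measurable_cong_sets[OF sM refl] by simp
  moreover have "measure (K x) {0..y} \<in> {0..1}" for x y
    using prob_space.prob_le_1[OF KP(1)] by simp
  moreover have "mono (\<lambda>y. measure (K x) {0..y})" for x
    using KP[of x] prob_space.finite_measure[OF KP(1)]
    by (intro monoI finite_measure.finite_measure_mono) auto
  moreover have "(\<integral>x. measure (K x) {0..y} \<partial>M) = y" if "y \<in> {0..1}" for y
    using K dcopula_meas_snd_atLeastAtMost[OF C that]
    by (auto simp: markov_kernel_of_def set_lebesgue_integral_def)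
  ultimately show ?thesis by (auto simp: uniform_cdf_family_def)
qed

lemma Phi_nonneg: "0 \<le> Phi M K1 K2 p y"
  unfolding Phi_def by simp

lemma Dp_le_of_le_tent:
  assumes cont: "continuous_on {0..1} (Phi M K1 K2 p)"
    and le: "\<And>y. y \<in> {0..1} \<Longrightarrow> Phi M K1 K2 p y \<le> 2 * min y (1 - y)"
    and p: "0 \<le> p"
  shows "Dp M K1 K2 p \<le> 2 powr (- 1 / p)"
proof -
  have "set_integrable lborel {0..1::real} (Phi M K1 K2 p)"
    "set_integrable lborel {0..1::real} (\<lambda>y. 2 * min y (1 - y))"
    unfolding set_integrable_def by (intro borel_integrable_compact cont continuous_intros; simp)+
  then have "(\<integral>y\<in>{0..1}. Phi M K1 K2 p y \<partial>lborel) \<le> (\<integral>y\<in>{0..1}. 2 * min y (1 - y) \<partial>lborel)"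
    using le by (intro set_integral_mono) auto
  then have "(\<integral>y\<in>{0..1}. Phi M K1 K2 p y \<partial>lborel) \<le> 1 / 2"
    unfolding set_integral_tent .
  moreover have "0 \<le> (\<integral>y\<in>{0..1}. Phi M K1 K2 p y \<partial>lborel)"
    unfolding set_lebesgue_integral_def
    by (intro Bochner_Integration.integral_nonneg) (simp add: Phi_nonneg)
  ultimately have "Dp M K1 K2 p \<le> (1 / 2) powr (1 / p)"
    unfolding Dp_def using p by (intro powr_mono2) auto
  then show ?thesis by (simp add: powr_divide powr_minus_divide)
qed

lemma Dp_eq_of_eq_tent:
  assumes "\<And>y. y \<in> {0..1} \<Longrightarrow> Phi M K1 K2 p y = 2 * min y (1 - y)"
  shows "Dp M K1 K2 p = 2 powr (- 1 / p)"
proof -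
  have "(\<integral>y\<in>{0..1}. Phi M K1 K2 p y \<partial>lborel) = (\<integral>y\<in>{0..1}. 2 * min y (1 - y) \<partial>lborel)"
    using assms by (intro set_lebesgue_integral_cong) auto
  then have integral_Phi: "(\<integral>y\<in>{0..1}. Phi M K1 K2 p y \<partial>lborel) = 1 / 2"
    unfolding set_integral_tent .
  show ?thesis unfolding Dp_def integral_Phi by (simp add: powr_divide powr_minus_divide)
qed

lemma Phi_bounds:
  assumes PM: "prob_space M"
    and F1: "uniform_cdf_family M (\<lambda>y x. measure (K1 x) {0..y})"
    and F2: "uniform_cdf_family M (\<lambda>y x. measure (K2 x) {0..y})"
    and p: "1 \<le> p"
  shows "\<And>y. y \<in> {0..1} \<Longrightarrow> Phi M K1 K2 p y \<le> 2 * min y (1 - y)"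
    and "Phi M K1 K2 p 0 = 0" and "Phi M K1 K2 p 1 = 0"
    and "(2 * p)-lipschitz_on {0..1} (Phi M K1 K2 p)"
    and "continuous_on {0..1} (Phi M K1 K2 p)"
    and "Dp M K1 K2 p \<le> 2 powr (- 1 / p)"
proof -
  show le: "Phi M K1 K2 p y \<le> 2 * min y (1 - y)" if "y \<in> {0..1}" for y
    unfolding Phi_def using prob_space.integral_abs_diff_powr_le_tent[OF PM F1 F2 p that] .
  show "Phi M K1 K2 p 0 = 0" "Phi M K1 K2 p 1 = 0"
    using le[of 0] le[of 1] Phi_nonneg[of M K1 K2 p] by (auto intro: antisym)
  show "(2 * p)-lipschitz_on {0..1} (Phi M K1 K2 p)"
    unfolding Phi_def[abs_def] using prob_space.lipschitz_on_integral_abs_diff_powr[OF PM F1 F2 p] .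
  then show cont: "continuous_on {0..1} (Phi M K1 K2 p)" by (rule lipschitz_on_continuous_on)
  show "Dp M K1 K2 p \<le> 2 powr (- 1 / p)" using Dp_le_of_le_tent[OF cont le] p by simp
qed

section \<open>Copulas concentrated on graphs\<close>

definition graph_meas :: "('a::topological_space) measure \<Rightarrow> ('a \<Rightarrow> real) \<Rightarrow> ('a \<times> real) measure" where
  "graph_meas M f = distr M borel (\<lambda>x. (x, f x))"

lemma measurable_graph:
  fixes f :: "'a::second_countable_topology \<Rightarrow> real"
  assumes sM: "sets M = sets borel" and f: "f \<in> borel_measurable borel"
  shows "(\<lambda>x. (x, f x)) \<in> measurable M borel"
  unfolding measurable_cong_sets[OF sM refl] borel_prod[symmetric] using f by measurable

lemma measure_graph_meas_Times:
  fixes f :: "'a::second_countable_topology \<Rightarrow> real"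
  assumes sM: "sets M = sets borel" and f: "f \<in> borel_measurable borel"
    and B: "B \<in> sets borel" and F: "F \<in> sets borel"
  shows "measure (graph_meas M f) (B \<times> F) = measure M (B \<inter> f -` F)"
proof -
  have "B \<times> F \<in> sets borel" using B F unfolding borel_prod[symmetric] by (rule pair_measureI)
  moreover have "space M = UNIV" using sets_eq_imp_space_eq[OF sM] by simp
  ultimately show ?thesis
    unfolding graph_meas_def using measurable_graph[OF sM f]
    by (subst measure_distr) (auto intro: arg_cong[where f="measure M"])
qed

lemma graph_meas_in_copulas_with_marginal:
  fixes M :: "(real^'n) measure"
  assumes A: "copula_meas M" and f: "f \<in> borel_measurable borel"
    and unif: "\<And>t. t \<in> {0..1} \<Longrightarrow> measure M {x. f x \<le> t} = t"
  shows "graph_meas M f \<in> copulas_with_marginal M"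
proof -
  note sM = copula_measD(2)[OF A] and space = copula_measD(3)[OF A]
  note graph = measurable_graph[OF sM f]
  have marginal: "measure (graph_meas M f) {z. P z} = measure M {x. P (x, f x)}"
    if "{z. P z} \<in> sets borel" for P
    unfolding graph_meas_def using that graph by (subst measure_distr) (auto simp: space)
  have "{z::(real^'n) \<times> real. fst z $ i \<le> t} \<in> sets borel" "{z::(real^'n) \<times> real. snd z \<le> t} \<in> sets borel"
    for i t by (intro borel_closed closed_Collect_le continuous_intros)+
  moreover have "prob_space (graph_meas M f)" "sets (graph_meas M f) = sets borel"
    unfolding graph_meas_def using prob_space.prob_space_distr[OF copula_measD(1)[OF A] graph] by auto
  ultimately have "dcopula_meas (graph_meas M f)"
    unfolding dcopula_meas_def using copula_measD(5)[OF A] unif by (simp add: marginal)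
  moreover have "distr (graph_meas M f) borel fst = M"
  proof -
    have "distr (graph_meas M f) borel fst = distr M borel (fst \<circ> (\<lambda>x. (x, f x)))"
      unfolding graph_meas_def
      by (rule distr_distr[OF _ graph]) (simp flip: borel_prod)
    also have "\<dots> = M" using distr_id2[of borel M] sM by (simp add: comp_def)
    finally show ?thesis .
  qed
  ultimately show ?thesis by (simp add: copulas_with_marginal_def)
qed

lemma markov_kernel_of_graph_meas:
  fixes M :: "(real^'n) measure"
  assumes sM: "sets M = sets borel" and f: "f \<in> borel_measurable borel"
  shows "markov_kernel_of M (graph_meas M f) (\<lambda>x. return borel (f x))"
  unfolding markov_kernel_of_def
proof (intro conjI ballI allI)
  fix x show "prob_space (return borel (f x))" by (rule prob_space_return) simp
  show "sets (return borel (f x)) = sets borel" by simp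
next
  fix F :: "real set" assume F: "F \<in> sets borel"
  show "(\<lambda>x. measure (return borel (f x)) F) \<in> borel_measurable borel"
    using F f by (simp add: measure_return)
  fix B :: "(real^'n) set" assume B: "B \<in> sets borel"
  have space: "space M = UNIV" using sets_eq_imp_space_eq[OF sM] by simp
  have "set_lebesgue_integral M B (\<lambda>x. measure (return borel (f x)) F)
      = integral\<^sup>L M (indicator (B \<inter> f -` F))"
    unfolding set_lebesgue_integral_def using F
    by (intro Bochner_Integration.integral_cong) (auto simp: measure_return indicator_def)
  also have "\<dots> = measure M (B \<inter> f -` F)" by (simp add: space)
  finally show "measure (graph_meas M f) (B \<times> F) = set_lebesgue_integral M B (\<lambda>x. measure (return borel (f x)) F)"
    using measure_graph_meas_Times[OF sM f B F] by simp
qed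

lemma markov_kernel_AE_indicator:
  fixes M :: "(real^'n) measure"
  assumes PM: "prob_space M" and sM: "sets M = sets borel" and K: "markov_kernel_of M C K"
    and F: "F \<in> sets borel" and S: "S \<in> sets borel"
    and rect: "\<And>B. B \<in> sets borel \<Longrightarrow> measure C (B \<times> F) = measure M (B \<inter> S)"
  shows "AE x in M. measure (K x) F = indicator S x"
proof -
  interpret prob_space M by fact
  define h where "h x = measure (K x) F" for x
  have h01: "0 \<le> h x" "h x \<le> 1" for x
    using K prob_space.prob_le_1 by (auto simp: h_def markov_kernel_of_def)
  have h_meas: "h \<in> borel_measurable M"
    using K F unfolding h_def markov_kernel_of_def measurable_cong_sets[OF sM refl] by simp
  have set_int: "(\<integral>x. indicator B x * h x \<partial>M) = measure M (B \<inter> S)" if "B \<in> sets borel" for B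
    using K F rect[OF that] that by (simp add: markov_kernel_of_def set_lebesgue_integral_def h_def)
  have int_ind: "integrable M (\<lambda>x. indicator B x * h x)" "integrable M (indicator B :: _ \<Rightarrow> real)"
    if "B \<in> sets borel" for B
    using that h01 h_meas sM by (auto intro!: integrable_const_bound[where B=1] simp: indicator_def)
  have "(\<integral>x. \<bar>h x - indicator S x\<bar> \<partial>M)
      = (\<integral>x. indicator S x - indicator S x * h x + indicator (- S) x * h x \<partial>M)"
    using h01 by (intro Bochner_Integration.integral_cong) (auto simp: indicator_def)
  also have "\<dots> = measure M S - measure M (S \<inter> S) + measure M (- S \<inter> S)"
    using S int_ind[OF S] int_ind[OF borel_comp[OF S]] set_int[OF S] set_int[OF borel_comp[OF S]] sM
    by simp
  finally have "(\<integral>x. \<bar>h x - indicator S x\<bar> \<partial>M) = 0" by simp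
  moreover have "integrable M (\<lambda>x. \<bar>h x - indicator S x\<bar>)"
    using h_meas S sM int_ind[OF S] by (intro integrable_abs Bochner_Integration.integrable_diff)
      (auto intro!: integrable_const_bound[where B=1] simp: h01)
  ultimately have "AE x in M. \<bar>h x - indicator S x\<bar> = 0"
    by (subst (asm) integral_nonneg_eq_0_iff_AE) auto
  then show ?thesis by (simp add: h_def)
qed

lemma Phi_graph_meas:
  fixes M :: "(real^'n) measure"
  assumes PM: "prob_space M" and sM: "sets M = sets borel"
    and f1: "f1 \<in> borel_measurable borel" and f2: "f2 \<in> borel_measurable borel"
    and K1: "markov_kernel_of M (graph_meas M f1) K1" and K2: "markov_kernel_of M (graph_meas M f2) K2"
  shows "Phi M K1 K2 p y = measure M (f1 -` {0..y}) + measure M (f2 -` {0..y})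
    - 2 * measure M (f1 -` {0..y} \<inter> f2 -` {0..y})"
proof -
  interpret prob_space M by fact
  define S1 S2 where "S1 = f1 -` {0..y}" and "S2 = f2 -` {0..y}"
  have S: "S1 \<in> sets borel" "S2 \<in> sets borel"
    using measurable_sets[OF f1, of "{0..y}"] measurable_sets[OF f2, of "{0..y}"]
    by (auto simp: S1_def S2_def)
  have AE: "AE x in M. measure (K1 x) {0..y} = indicator S1 x"
    "AE x in M. measure (K2 x) {0..y} = indicator S2 x"
    using markov_kernel_AE_indicator[OF PM sM K1 _ S(1)] markov_kernel_AE_indicator[OF PM sM K2 _ S(2)]
      measure_graph_meas_Times[OF sM f1] measure_graph_meas_Times[OF sM f2]
    by (auto simp: S1_def S2_def)
  have "(\<lambda>x. measure (K1 x) {0..y}) \<in> borel_measurable M" "(\<lambda>x. measure (K2 x) {0..y}) \<in> borel_measurable M"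
    using K1 K2 unfolding markov_kernel_of_def measurable_cong_sets[OF sM refl] by auto
  then have "Phi M K1 K2 p y = (\<integral>x. \<bar>indicator S1 x - indicator S2 x\<bar> powr p \<partial>M)"
    unfolding Phi_def using AE S sM by (intro integral_cong_AE) auto
  \<comment> \<open>valid for every \<open>p\<close>, since \<open>0 powr p = 0\<close> and \<open>1 powr p = 1\<close>\<close>
  also have "\<dots> = (\<integral>x. indicator S1 x + indicator S2 x - 2 * indicator (S1 \<inter> S2) x \<partial>M)"
    by (intro Bochner_Integration.integral_cong) (auto simp: indicator_def)
  also have "\<dots> = measure M S1 + measure M S2 - 2 * measure M (S1 \<inter> S2)"
  proof -
    have "integrable M (indicator T :: _ \<Rightarrow> real)" if "T \<in> sets M" for T
      using that by (simp add: emeasure_eq_measure)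
    then show ?thesis using S sM by simp
  qed
  finally show ?thesis by (simp add: S1_def S2_def)
qed

lemma borel_measurable_coordinate:
  "(\<lambda>x::real^'n. x $ i) \<in> borel_measurable borel" "(\<lambda>x::real^'n. 1 - x $ i) \<in> borel_measurable borel"
  by (intro borel_measurable_continuous_onI continuous_intros)+

lemma copula_meas_reflected_coordinate_le:
  assumes "copula_meas M" "t \<in> {0..1}"
  shows "measure M {x. 1 - x $ i \<le> t} = t"
proof -
  have "{x. 1 - x $ i \<le> t} = {x. 1 - t \<le> x $ i}" by auto
  then show ?thesis using copula_meas_coordinate_ge[OF assms(1), of "1 - t" i] assms(2) by simp
qed

lemma Phi_coordinate_graphs_eq_tent:
  fixes M :: "(real^'n) measure"
  assumes A: "copula_meas M"
    and K1: "markov_kernel_of M (graph_meas M (\<lambda>x. x $ i)) K1"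
    and K2: "markov_kernel_of M (graph_meas M (\<lambda>x. 1 - x $ i)) K2"
    and y: "y \<in> {0..1}"
  shows "Phi M K1 K2 p y = 2 * min y (1 - y)"
proof -
  have "(\<lambda>x::real^'n. 1 - x $ i) -` {0..y} = {x. x $ i \<in> {1 - y..1}}" by auto
  then have "Phi M K1 K2 p y = measure M {x. x $ i \<in> {0..y}} + measure M {x. x $ i \<in> {1 - y..1}}
      - 2 * measure M ({x. x $ i \<in> {0..y}} \<inter> {x. x $ i \<in> {1 - y..1}})"
    using Phi_graph_meas[OF copula_measD(1,2)[OF A] borel_measurable_coordinate K1 K2]
    by (simp add: vimage_def)
  moreover have "measure M ({x. x $ i \<in> {0..y}} \<inter> {x. x $ i \<in> {1 - y..1}}) = max 0 (2 * y - 1)"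
  proof (cases "y < 1 / 2")
    case True
    then have "{x. x $ i \<in> {0..y}} \<inter> {x. x $ i \<in> {1 - y..1}} = {}" by auto
    then show ?thesis using True by simp
  next
    case False
    then have "{x. x $ i \<in> {0..y}} \<inter> {x. x $ i \<in> {1 - y..1}} = {x. x $ i \<in> {1 - y..y}}"
      using y by auto
    then show ?thesis using False y copula_meas_coordinate_atLeastAtMost[OF A] by simp
  qed
  ultimately show ?thesis using y copula_meas_coordinate_atLeastAtMost[OF A] by (simp add: min_def)
qed

theorem lemma17:
  fixes \<mu>A :: "(real^'n) measure" and p :: real
  assumes A: "copula_meas \<mu>A" and p: "1 \<le> p"
  shows
    "(\<forall>C1\<in>copulas_with_marginal \<mu>A. \<forall>C2\<in>copulas_with_marginal \<mu>A. \<forall>K1 K2.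
        markov_kernel_of \<mu>A C1 K1 \<longrightarrow> markov_kernel_of \<mu>A C2 K2 \<longrightarrow>
          Phi \<mu>A K1 K2 p 0 = 0 \<and> Phi \<mu>A K1 K2 p 1 = 0 \<and>
          continuous_on {0..1} (Phi \<mu>A K1 K2 p) \<and>
          (p = 1 \<longrightarrow> 2-lipschitz_on {0..1} (Phi \<mu>A K1 K2 p)) \<and>
          (\<forall>y\<in>{0..1}. Phi \<mu>A K1 K2 p y \<le> 2 * min y (1 - y)) \<and>
          Dp \<mu>A K1 K2 p \<le> 2 powr (- 1 / p))
   \<and> (\<exists>C1\<in>copulas_with_marginal \<mu>A. \<exists>C2\<in>copulas_with_marginal \<mu>A.
        (\<exists>K1 K2. markov_kernel_of \<mu>A C1 K1 \<and> markov_kernel_of \<mu>A C2 K2) \<and>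
        (\<forall>K1 K2. markov_kernel_of \<mu>A C1 K1 \<longrightarrow> markov_kernel_of \<mu>A C2 K2 \<longrightarrow>
           (\<forall>y\<in>{0..1}. Phi \<mu>A K1 K2 p y = 2 * min y (1 - y))))
   \<and> (\<exists>C1\<in>copulas_with_marginal \<mu>A. \<exists>C2\<in>copulas_with_marginal \<mu>A.
        (\<exists>K1 K2. markov_kernel_of \<mu>A C1 K1 \<and> markov_kernel_of \<mu>A C2 K2) \<and>
        (\<forall>K1 K2. markov_kernel_of \<mu>A C1 K1 \<longrightarrow> markov_kernel_of \<mu>A C2 K2 \<longrightarrow>
           Dp \<mu>A K1 K2 p = 2 powr (- 1 / p)))"
proof -
  note PM = copula_measD(1)[OF A] and sM = copula_measD(2)[OF A]
  have cdf: "uniform_cdf_family \<mu>A (\<lambda>y x. measure (K x) {0..y})"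
    if "C \<in> copulas_with_marginal \<mu>A" "markov_kernel_of \<mu>A C K" for C K
    using that uniform_cdf_family_markov_kernel[OF sM] by (auto simp: copulas_with_marginal_def)
  have upper: "Phi \<mu>A K1 K2 p 0 = 0 \<and> Phi \<mu>A K1 K2 p 1 = 0 \<and> continuous_on {0..1} (Phi \<mu>A K1 K2 p) \<and>
      (p = 1 \<longrightarrow> 2-lipschitz_on {0..1} (Phi \<mu>A K1 K2 p)) \<and>
      (\<forall>y\<in>{0..1}. Phi \<mu>A K1 K2 p y \<le> 2 * min y (1 - y)) \<and> Dp \<mu>A K1 K2 p \<le> 2 powr (- 1 / p)"
    if "C1 \<in> copulas_with_marginal \<mu>A" "C2 \<in> copulas_with_marginal \<mu>A"
      "markov_kernel_of \<mu>A C1 K1" "markov_kernel_of \<mu>A C2 K2" for C1 C2 K1 K2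
    using Phi_bounds[OF PM cdf[OF that(1,3)] cdf[OF that(2,4)] p] by auto
  obtain i :: 'n where True by blast
  let ?C1 = "graph_meas \<mu>A (\<lambda>x. x $ i)" and ?C2 = "graph_meas \<mu>A (\<lambda>x. 1 - x $ i)"
  have graphs: "?C1 \<in> copulas_with_marginal \<mu>A" "?C2 \<in> copulas_with_marginal \<mu>A"
    using graph_meas_in_copulas_with_marginal[OF A borel_measurable_coordinate(1) copula_measD(5)[OF A]]
      graph_meas_in_copulas_with_marginal[OF A borel_measurable_coordinate(2)
        copula_meas_reflected_coordinate_le[OF A]]
    by auto
  have kernels: "markov_kernel_of \<mu>A ?C1 (\<lambda>x. return borel (x $ i))"
    "markov_kernel_of \<mu>A ?C2 (\<lambda>x. return borel (1 - x $ i))"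
    using markov_kernel_of_graph_meas[OF sM borel_measurable_coordinate(1)]
      markov_kernel_of_graph_meas[OF sM borel_measurable_coordinate(2)] by auto
  have sharp: "\<forall>y\<in>{0..1}. Phi \<mu>A K1 K2 p y = 2 * min y (1 - y)"
    and sharp_Dp: "Dp \<mu>A K1 K2 p = 2 powr (- 1 / p)"
    if "markov_kernel_of \<mu>A ?C1 K1" "markov_kernel_of \<mu>A ?C2 K2" for K1 K2
    using Phi_coordinate_graphs_eq_tent[OF A that] Dp_eq_of_eq_tent by blast+
  show ?thesis using upper graphs kernels sharp sharp_Dp by blast
qed

end
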